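(* Let $\Omega$ be a finite set and $f:2^{\Omega}\to\mathbb{R}$ increasing with $f(\emptyset)=0$. Let $H_f=\mathrm{conv}\{(x(\mathcal{S}),z)\in\mathbb{R}^{|\Omega|}\times\mathbb{R}:\mathcal{S}\subseteq\Omega,\ f(\mathcal{S})\le z\}$. Suppose $\gamma\in\mathbb{R}^{|\Omega|}$, $\gamma_0\in\mathbb{R}$, and the inequality $\sum_{s\in\Omega}\gamma_sx_s\le z+|\Omega|D[f]+\gamma_0$ defines a nontrivial facet of $H_f$. Let $\bar f:2^{\Omega}\to\mathbb{R}$ be defined by $\bar f(\emptyset)=0$ and $\bar f(\mathcal{S})=f(\mathcal{S})+|\Omega|D[f]+\gamma_0$ for all nonempty $\mathcal{S}\subseteq\Omega$, and suppose $\gamma\in\Gamma(\bar f)$. Then $\gamma_0\le0$.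
   Context: $x(\mathcal{S})$ is the characteristic vector of $\mathcal{S}$. A facet is nontrivial if it is not defined by a variable bound inequality. For a set function $h$ and permutation $\pi$ of $\Omega$, $\mathcal{S}^\pi_0=\emptyset$, $\mathcal{S}^\pi_k=\{\pi_1,\dots,\pi_k\}$; $\Gamma(h)=\{\gamma\in\mathbb{R}^{|\Omega|}:\exists$ permutation $\pi$ with $\gamma_{\pi_i}=h(\mathcal{S}^\pi_i)-h(\mathcal{S}^\pi_{i-1})$ for all $i\}$. $D[f]=\max\{f(\mathcal{A}\cup\mathcal{B}\cup\{s\})-f(\mathcal{A}\cup\mathcal{B})-f(\mathcal{A}\cup\{s\})+f(\mathcal{A}):\mathcal{A},\mathcal{B}\subseteq\Omega,s\in\Omega,|\mathcal{A}|\le|\Omega|-1\}$. *)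

theory Defs
  imports "HOL-Analysis.Analysis"
begin

text \<open>Ground set Omega is the finite type 'n (Omega = UNIV); R^|Omega| is real^'n.\<close>

definition charvec :: "'n::finite set \<Rightarrow> real^'n" where
  "charvec S = (\<chi> i. if i \<in> S then 1 else 0)"

definition increasing_sf :: "('n::finite set \<Rightarrow> real) \<Rightarrow> bool" where
  "increasing_sf f \<longleftrightarrow> (\<forall>A B. A \<subseteq> B \<longrightarrow> f A \<le> f B)"

definition Hf :: "('n::finite set \<Rightarrow> real) \<Rightarrow> ((real^'n) \<times> real) set" where
  "Hf f = convex hull {(charvec S, z) | S z. f S \<le> z}"

definition Dsf :: "('n::finite set \<Rightarrow> real) \<Rightarrow> real" where
  "Dsf f = Max {f (A \<union> B \<union> {s}) - f (A \<union> B) - f (A \<union> {s}) + f A | A B s.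
                 card A \<le> CARD('n) - 1}"

text \<open>Gamma(h): permutation pi of Omega given as a distinct list enumerating Omega;
  S^pi_i = set (take i pi), and gamma_{pi_i} = h(S^pi_i) - h(S^pi_{i-1}).\<close>
definition Gamma :: "('n::finite set \<Rightarrow> real) \<Rightarrow> (real^'n) set" where
  "Gamma h = {\<gamma>. \<exists>ps. distinct ps \<and> set ps = UNIV \<and>
      (\<forall>i < length ps. \<gamma> $ (ps ! i) = h (set (take (Suc i) ps)) - h (set (take i ps)))}"

definition lin_x :: "real^'n::finite \<Rightarrow> real^'n \<Rightarrow> real" where
  "lin_x a x = (\<Sum>s\<in>UNIV. a $ s * x $ s)"

definition tight_face :: "((real^'n::finite) \<times> real) set \<Rightarrow> real^'n \<Rightarrow> real \<Rightarrow> ((real^'n) \<times> real) set" where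
  "tight_face H a c = {p \<in> H. lin_x a (fst p) = snd p + c}"

definition defines_facet :: "((real^'n::finite) \<times> real) set \<Rightarrow> real^'n \<Rightarrow> real \<Rightarrow> bool" where
  "defines_facet H a c \<longleftrightarrow>
     (\<forall>p\<in>H. lin_x a (fst p) \<le> snd p + c) \<and>
     aff_dim (tight_face H a c) = aff_dim H - 1"

text \<open>Nontrivial facet: not the face defined by a variable bound inequality
  x_s >= 0 or x_s <= 1.\<close>
definition defines_nontrivial_facet :: "((real^'n::finite) \<times> real) set \<Rightarrow> real^'n \<Rightarrow> real \<Rightarrow> bool" where
  "defines_nontrivial_facet H a c \<longleftrightarrow> defines_facet H a c \<and>
     (\<forall>s. tight_face H a c \<noteq> {p \<in> H. fst p $ s = 0} \<and>
          tight_face H a c \<noteq> {p \<in> H. fst p $ s = 1})"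

end

theory Submission
  imports Defs
begin

text \<open>Suppose \<open>\<gamma>0 > 0\<close>, so that \<open>c = |\<Omega>| D[f] + \<gamma>0\<close> exceeds \<open>D[f] \<ge> 0\<close>, and let \<open>s\<close> be the
  first element of the permutation realising \<open>\<gamma> \<in> \<Gamma>(f_bar)\<close>, so \<open>\<gamma>\<^sub>s = f({s}) + c\<close>.
  For \<open>s \<notin> S\<close>, validity at \<open>S \<union> {s}\<close> and the definition of \<open>D[f]\<close> give
  \<open>\<gamma>(S) \<le> f(S) + D[f] < f(S) + c\<close>, so every point of \<open>H\<^sub>f\<close> on which the inequality is tight
  has \<open>x\<^sub>s = 1\<close>. The tight face then lies strictly inside the proper face \<open>{x\<^sub>s = 1}\<close>, so its
  dimension drops by at least two and it cannot be a facet.\<close>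

lemma lin_x_eq_inner: "lin_x a x = a \<bullet> x"
  by (simp add: lin_x_def inner_vec_def)

lemma lin_x_charvec: "lin_x a (charvec S) = (\<Sum>i\<in>S. a $ i)"
proof -
  have "lin_x a (charvec S) = (\<Sum>i\<in>UNIV. if i \<in> S then a $ i else 0)"
    unfolding lin_x_def charvec_def by (intro sum.cong) auto
  also have "\<dots> = (\<Sum>i\<in>S. a $ i)"
    by (simp add: sum.If_cases)
  finally show ?thesis .
qed

lemma Dsf_ge:
  fixes f :: "'n::finite set \<Rightarrow> real"
  assumes "card A \<le> CARD('n) - 1"
  shows "f (A \<union> B \<union> {s}) - f (A \<union> B) - f (A \<union> {s}) + f A \<le> Dsf f"
proof -
  let ?d = "\<lambda>(A, B, s). f (A \<union> B \<union> {s}) - f (A \<union> B) - f (A \<union> {s}) + f A"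
  let ?M = "{f (A \<union> B \<union> {s}) - f (A \<union> B) - f (A \<union> {s}) + f A | A B s.
                 card A \<le> CARD('n) - 1}"
  have "?M \<subseteq> range ?d"
    by (fastforce intro: rev_image_eqI[of "(A, B, s)" for A B s])
  then have "finite ?M"
    by (rule finite_subset) simp
  then show ?thesis
    unfolding Dsf_def by (rule Max_ge) (use assms in blast)
qed

lemma Dsf_nonneg: "0 \<le> Dsf f"
  using Dsf_ge[where A = "{}" and B = "{}" and f = f] by simp

lemma Dsf_ge_singleton_increment:
  "f (S \<union> {s}) - f S - f {s} + f {} \<le> Dsf f"
  using Dsf_ge[where A = "{}" and f = f] by simp

lemma Gamma_first_increment:
  assumes "\<gamma> \<in> Gamma h"
  obtains s where "\<gamma> $ s = h {s} - h {}"
proof -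
  obtain ps where ps: "set ps = UNIV"
    "\<And>i. i < length ps \<Longrightarrow> \<gamma> $ (ps ! i) = h (set (take (Suc i) ps)) - h (set (take i ps))"
    using assms unfolding Gamma_def by blast
  then obtain s ps' where "ps = s # ps'"
    by (cases ps) auto
  with ps(2)[of 0] show ?thesis
    by (intro that[of s]) simp
qed

lemma Hf_subset_halfspace_le:
  assumes "\<And>S z. f S \<le> z \<Longrightarrow> a \<bullet> (charvec S, z) \<le> b"
  shows "Hf f \<subseteq> {p. a \<bullet> p \<le> b}"
  unfolding Hf_def
  by (rule hull_minimal) (auto intro: assms convex_halfspace_le)

lemma Hf_generator: "f S \<le> z \<Longrightarrow> (charvec S, z) \<in> Hf f"
  unfolding Hf_def by (rule hull_inc) blast

lemma convex_Hf: "convex (Hf f)"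
  unfolding Hf_def by (rule convex_convex_hull)

lemma Hf_coordinate_le_one:
  assumes "p \<in> Hf f"
  shows "fst p $ s \<le> 1"
proof -
  have "Hf f \<subseteq> {p. (axis s 1, 0) \<bullet> p \<le> 1}"
    by (rule Hf_subset_halfspace_le) (simp add: inner_axis' charvec_def)
  with assms have "(axis s 1, 0) \<bullet> p \<le> 1"
    by blast
  then show ?thesis
    by (cases p) (simp add: inner_axis')
qed

lemma Hf_coordinate_one_face_of:
  "{p \<in> Hf f. fst p $ s = 1} face_of Hf f"
proof -
  have "{p \<in> Hf f. fst p $ s = 1} = Hf f \<inter> {p. (axis s 1, 0) \<bullet> p = 1}"
    by (auto simp: inner_axis')
  also have "\<dots> face_of Hf f"
    by (rule face_of_Int_supporting_hyperplane_le[OF convex_Hf])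
      (use Hf_coordinate_le_one in \<open>force simp: inner_axis' inner_prod_def\<close>)
  finally show ?thesis .
qed

lemma Hf_coordinate_one_face_proper:
  "{p \<in> Hf f. fst p $ s = 1} \<noteq> Hf f"
proof -
  have "(charvec {}, f {}) \<in> Hf f"
    by (rule Hf_generator) simp
  moreover have "(charvec {}, f {}) \<notin> {p \<in> Hf f. fst p $ s = 1}"
    by (simp add: charvec_def)
  ultimately show ?thesis
    by blast
qed

lemma tight_face_face_of:
  assumes "convex H" and "\<forall>p\<in>H. lin_x a (fst p) \<le> snd p + c"
  shows "tight_face H a c face_of H"
proof -
  have "tight_face H a c = H \<inter> {p. (a, -1) \<bullet> p = c}"
    unfolding tight_face_def by (auto simp: lin_x_eq_inner)
  also have "\<dots> face_of H"
    by (rule face_of_Int_supporting_hyperplane_le[OF assms(1)])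
      (use assms(2) in \<open>fastforce simp: lin_x_eq_inner\<close>)
  finally show ?thesis .
qed

lemma face_strictly_inside_proper_face_aff_dim:
  fixes H :: "'a::euclidean_space set"
  assumes "convex H" and "T face_of H" and "G face_of H"
    and "T \<subseteq> G" and "T \<noteq> G" and "G \<noteq> H"
  shows "aff_dim T < aff_dim H - 1"
proof -
  have "aff_dim G < aff_dim H"
    using face_of_aff_dim_lt assms(1,3,6) by blast
  moreover have "T face_of G"
    using face_of_subset assms(2-4) face_of_imp_subset by blast
  then have "aff_dim T < aff_dim G"
    using face_of_aff_dim_lt face_of_imp_convex assms(3,5) by blast
  ultimately show ?thesis
    by linarith
qed

text \<open>The vector \<open>a\<close> below is the normal of the inequality
  \<open>\<gamma>\<^sup>Tx - z - (c - D[f]) x\<^sub>s \<le> D[f]\<close>, valid on all generators; at a tight point it forces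
  \<open>x\<^sub>s \<ge> 1\<close>.\<close>

lemma tight_face_subset_coordinate_one:
  fixes f :: "'n::finite set \<Rightarrow> real"
  assumes "f {} = 0" and "Dsf f < c" and "\<gamma> $ s = f {s} + c"
    and valid: "\<forall>p\<in>Hf f. lin_x \<gamma> (fst p) \<le> snd p + c"
  shows "tight_face (Hf f) \<gamma> c \<subseteq> {p \<in> Hf f. fst p $ s = 1}"
proof
  define \<epsilon> where "\<epsilon> = c - Dsf f"
  define a where "a = (\<gamma> - axis s \<epsilon>, -1::real)"
  have a_inner: "a \<bullet> p = lin_x \<gamma> (fst p) - snd p - \<epsilon> * fst p $ s" for p :: "(real^'n) \<times> real"
    by (cases p) (simp add: a_def inner_diff_left lin_x_eq_inner inner_axis' mult.commute)
  have "a \<bullet> (charvec S, z) \<le> c - \<epsilon>" if "f S \<le> z" for S z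
  proof (cases "s \<in> S")
    case True
    have "lin_x \<gamma> (charvec S) \<le> z + c"
      using valid Hf_generator[of f S z, OF that] by fastforce
    with True show ?thesis
      by (simp add: a_inner charvec_def)
  next
    case False
    have "lin_x \<gamma> (charvec (S \<union> {s})) \<le> f (S \<union> {s}) + c"
      using valid Hf_generator[of f "S \<union> {s}"] by fastforce
    moreover have "lin_x \<gamma> (charvec (S \<union> {s})) = lin_x \<gamma> (charvec S) + \<gamma> $ s"
      using False by (simp add: lin_x_charvec)
    ultimately have "lin_x \<gamma> (charvec S) \<le> f S + Dsf f"
      using assms(1,3) Dsf_ge_singleton_increment[of f S s] by linarith
    with False that show ?thesis
      by (simp add: a_inner charvec_def \<epsilon>_def)
  qed
  then have bound: "a \<bullet> p \<le> c - \<epsilon>" if "p \<in> Hf f" for p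
    using Hf_subset_halfspace_le that by blast
  fix p
  assume "p \<in> tight_face (Hf f) \<gamma> c"
  then have p: "p \<in> Hf f" "lin_x \<gamma> (fst p) = snd p + c"
    unfolding tight_face_def by auto
  have "0 < \<epsilon>"
    using assms(2) by (simp add: \<epsilon>_def)
  with bound[OF p(1)] p(2) have "1 \<le> fst p $ s"
    by (simp add: a_inner)
  with Hf_coordinate_le_one[OF p(1), of s] p(1) show "p \<in> {p \<in> Hf f. fst p $ s = 1}"
    by simp
qed

theorem mainTheorem10:
  fixes f :: "'n::finite set \<Rightarrow> real" and \<gamma> :: "real^'n" and \<gamma>0 :: real
  assumes "increasing_sf f" and "f {} = 0"
    and "defines_nontrivial_facet (Hf f) \<gamma> (real CARD('n) * Dsf f + \<gamma>0)"
    and "\<gamma> \<in> Gamma (\<lambda>S. if S = {} then 0 else f S + real CARD('n) * Dsf f + \<gamma>0)"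
  shows "\<gamma>0 \<le> 0"
proof (rule ccontr)
  assume "\<not> \<gamma>0 \<le> 0"
  define c where "c = real CARD('n) * Dsf f + \<gamma>0"
  have "Dsf f \<le> real CARD('n) * Dsf f"
    using Dsf_nonneg[of f] by (simp add: mult_le_cancel_right1)
  with \<open>\<not> \<gamma>0 \<le> 0\<close> have "Dsf f < c"
    unfolding c_def by linarith
  define f_bar where "f_bar = (\<lambda>S. if S = {} then 0 else f S + c)"
  have "\<gamma> \<in> Gamma f_bar"
    using assms(4) unfolding f_bar_def c_def by (simp only: add.assoc)
  then obtain s where "\<gamma> $ s = f_bar {s} - f_bar {}"
    by (rule Gamma_first_increment)
  then have s: "\<gamma> $ s = f {s} + c"
    by (simp add: f_bar_def)
  let ?T = "tight_face (Hf f) \<gamma> c" and ?G = "{p \<in> Hf f. fst p $ s = 1}"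
  have valid: "\<forall>p\<in>Hf f. lin_x \<gamma> (fst p) \<le> snd p + c"
    and facet_dim: "aff_dim ?T = aff_dim (Hf f) - 1" and "?T \<noteq> ?G"
    using assms(3) unfolding c_def defines_nontrivial_facet_def defines_facet_def by blast+
  have "aff_dim ?T < aff_dim (Hf f) - 1"
    by (rule face_strictly_inside_proper_face_aff_dim[OF convex_Hf
          tight_face_face_of[OF convex_Hf valid] Hf_coordinate_one_face_of
          tight_face_subset_coordinate_one[OF assms(2) \<open>Dsf f < c\<close> s valid]
          \<open>?T \<noteq> ?G\<close> Hf_coordinate_one_face_proper])
  with facet_dim show False
    by simp
qed

end
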